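(* Let $\mathbf i,\mathbf i'\in I^{(\infty)}$ be related by a 4-move $\mathbf i'=\eta_k\mathbf i$. Then $$\Lambda^{\mathbf i'}=\sigma_{k+2}\sigma_k\,\mu_k\mu_{k+1}\mu_k\,\Lambda^{\mathbf i},$$ where the mutations of $\Lambda$ are performed jointly with those of $\widetilde B^{\mathbf i}$ (i.e. $(\Lambda^{\mathbf i'},\widetilde B^{\mathbf i'})=\sigma_{k+2}\sigma_k\mu_k\mu_{k+1}\mu_k(\Lambda^{\mathbf i},\widetilde B^{\mathbf i})$ in the first component).
   Context: Let $\mathfrak g$ be a complex finite-dimensional simple Lie algebra with index set $I$, Cartan matrix $\mathsf C=(\mathsf c_{i,j})_{i,j\in I}$, simple roots $\alpha_i$, fundamental weights $\varpi_i$, Weyl group $W$ generated by simple reflections $s_i$, and $W$-invariant symmetric bilinear form $(\cdot,\cdot)$ on the weight lattice with $(\alpha_i,\alpha_j)=\mathsf d_i\mathsf c_{i,j}$, where $\mathrm{diag}(\mathsf d_i)$ is the minimal positive integral left symmetrizer of $\mathsf C$. Write $\mathbb N=\{1,2,\dots\}$, $[a]_+=\max(a,0)$. $I^{(\infty)}$ is the set of sequences $\mathbf i=(i_u)_{u\in\mathbb N}\in I^{\mathbb N}$ in which every element of $I$ occurs infinitely often. For $u\in\mathbb N$: $u^+=u^+_{\mathbf i}=\min\{v>u:i_v=i_u\}$, $u^-=u^-_{\mathbf i}=\max(\{v<u:i_v=i_u\}\cup\{0\})$, $w_u=w^{\mathbf i}_u=s_{i_1}\cdots s_{i_u}$. The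 exchange matrix $\widetilde B^{\mathbf i}=(b_{u,v})_{u,v\in\mathbb N}$: $b_{u,v}=1$ if $v=u^+$; $-1$ if $v=u^-$; $\mathsf c_{i_u,i_v}$ if $u<v<u^+<v^+$; $-\mathsf c_{i_u,i_v}$ if $v<u<v^+<u^+$; $0$ otherwise. The skew-symmetric matrix $\Lambda^{\mathbf i}$: $\Lambda_{u,v}=-\Lambda_{v,u}=(\varpi_{i_u}-w_u\varpi_{i_u},\varpi_{i_v}+w_v\varpi_{i_v})$ for $u\le v$. Mutation: for $k\in\mathbb N$, $\mu_k(\Lambda,\widetilde B)=(E^T\Lambda E,E\widetilde BF)$ where, with $\widetilde B=(b_{u,v})$, $e_{u,v}=\delta_{u,v}$ ($v\neq k$), $e_{k,k}=-1$, $e_{u,k}=[-b_{u,k}]_+$ ($u\ne k$); $f_{u,v}=\delta_{u,v}$ ($u\ne k$), $f_{k,k}=-1$, $f_{k,v}=[b_{k,v}]_+$ ($v\ne k$). For a permutation $\pi$ of $\mathbb N$, $(\pi\Lambda)_{u,v}=\Lambda_{\pi^{-1}(u),\pi^{-1}(v)}$, $(\pi\widetilde B)_{u,v}=b_{\pi^{-1}(u),\pi^{-1}(v)}$; $\sigma_k$ is the transposition of $k$ and $k+1$. Composites of operators act right to left, each mutation using the exchange matrix produced by the previous steps. A 4-move: $\mathbf i'=\eta_k\mathbf i$ means $i_k=i_{k+2}=i'_{k+1}=i'_{k+3}$, $i_{k+1}=i_{k+3}=i'_k=i'_{k+2}$, $i_u=i'_u$ for $u\notin[k,k+3]$, and $\mathsf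 c_{i_{k+1},i_k}\mathsf c_{i_k,i_{k+1}}=2$. *)

theory Defs
  imports Complex_Main "HOL-Library.Groups_Big_Fun" "HOL-Combinatorics.Transposition" "HOL-Library.Function_Algebras"
begin

text \<open>Cartan data. The index set I is a finite type 'i. A weight is given by its
coordinates in the basis of fundamental weights, i.e. a function 'i \<Rightarrow> int.\<close>

definition cartan_of_simple_lie_algebra :: "('i::finite \<Rightarrow> 'i \<Rightarrow> int) \<Rightarrow> bool" where
  "cartan_of_simple_lie_algebra C \<longleftrightarrow>
     (\<forall>i. C i i = 2) \<and>
     (\<forall>i j. i \<noteq> j \<longrightarrow> C i j \<le> 0) \<and>
     (\<forall>i j. C i j = 0 \<longleftrightarrow> C j i = 0) \<and>
     \<comment> \<open>indecomposable\<close>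
     (\<forall>J. J \<noteq> {} \<and> J \<noteq> UNIV \<longrightarrow> (\<exists>i\<in>J. \<exists>j\<in>- J. C i j \<noteq> 0)) \<and>
     \<comment> \<open>of finite type: symmetrizable with positive definite symmetrization\<close>
     (\<exists>d::'i \<Rightarrow> int. (\<forall>i. d i > 0) \<and> (\<forall>i j. d i * C i j = d j * C j i) \<and>
        (\<forall>x::'i \<Rightarrow> real. (\<exists>i. x i \<noteq> 0) \<longrightarrow>
            (\<Sum>i\<in>UNIV. \<Sum>j\<in>UNIV. x i * of_int (d i * C i j) * x j) > 0))"

definition is_left_symmetrizer :: "('i \<Rightarrow> 'i \<Rightarrow> int) \<Rightarrow> ('i \<Rightarrow> int) \<Rightarrow> bool" where
  "is_left_symmetrizer C d \<longleftrightarrow> (\<forall>i. d i > 0) \<and> (\<forall>i j. d i * C i j = d j * C j i)"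

definition is_min_symmetrizer :: "('i \<Rightarrow> 'i \<Rightarrow> int) \<Rightarrow> ('i \<Rightarrow> int) \<Rightarrow> bool" where
  "is_min_symmetrizer C d \<longleftrightarrow> is_left_symmetrizer C d \<and>
     (\<forall>d'. is_left_symmetrizer C d' \<longrightarrow> (\<forall>i. d i \<le> d' i))"

definition fund_wt :: "'i \<Rightarrow> ('i \<Rightarrow> int)" where
  "fund_wt i = (\<lambda>j. if j = i then 1 else 0)"

definition simple_root :: "('i \<Rightarrow> 'i \<Rightarrow> int) \<Rightarrow> 'i \<Rightarrow> ('i \<Rightarrow> int)" where
  "simple_root C j = (\<lambda>i. C i j)"

text \<open>simple reflection s_i lambda = lambda - <alpha_i^vee, lambda> alpha_i\<close>
definition srefl :: "('i \<Rightarrow> 'i \<Rightarrow> int) \<Rightarrow> 'i \<Rightarrow> ('i \<Rightarrow> int) \<Rightarrow> ('i \<Rightarrow> int)" where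
  "srefl C i lam = (\<lambda>j. lam j - lam i * C j i)"

definition invariant_form ::
  "('i \<Rightarrow> 'i \<Rightarrow> int) \<Rightarrow> ('i \<Rightarrow> int) \<Rightarrow> (('i \<Rightarrow> int) \<Rightarrow> ('i \<Rightarrow> int) \<Rightarrow> rat) \<Rightarrow> bool" where
  "invariant_form C d form \<longleftrightarrow>
     (\<forall>x y z. form (x + y) z = form x z + form y z) \<and>
     (\<forall>x y. form x y = form y x) \<and>
     (\<forall>i x y. form (srefl C i x) (srefl C i y) = form x y) \<and>
     (\<forall>i j. form (simple_root C i) (simple_root C j) = of_int (d i * C i j))"

text \<open>Sequences i = (i_u)_{u \<in> N} are functions nat \<Rightarrow> 'i; the value at 0 is irrelevant.\<close>
definition in_I_infty :: "(nat \<Rightarrow> 'i) \<Rightarrow> bool" where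
  "in_I_infty s \<longleftrightarrow> (\<forall>a. infinite {u. 1 \<le> u \<and> s u = a})"

definition seq_plus :: "(nat \<Rightarrow> 'i) \<Rightarrow> nat \<Rightarrow> nat" where
  "seq_plus s u = (LEAST v. u < v \<and> s v = s u)"

definition seq_minus :: "(nat \<Rightarrow> 'i) \<Rightarrow> nat \<Rightarrow> nat" where
  "seq_minus s u = Max ({v. 0 < v \<and> v < u \<and> s v = s u} \<union> {0})"

fun weyl_act :: "('i \<Rightarrow> 'i \<Rightarrow> int) \<Rightarrow> (nat \<Rightarrow> 'i) \<Rightarrow> nat \<Rightarrow> ('i \<Rightarrow> int) \<Rightarrow> ('i \<Rightarrow> int)" where
  "weyl_act C s 0 lam = lam"
| "weyl_act C s (Suc u) lam = weyl_act C s u (srefl C (s (Suc u)) lam)"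

text \<open>Matrices indexed by N are functions nat \<Rightarrow> nat \<Rightarrow> _; index 0 carries the entry 0.\<close>
definition exch_matrix :: "('i \<Rightarrow> 'i \<Rightarrow> int) \<Rightarrow> (nat \<Rightarrow> 'i) \<Rightarrow> nat \<Rightarrow> nat \<Rightarrow> int" where
  "exch_matrix C s u v =
    (if u = 0 \<or> v = 0 then 0
     else if v = seq_plus s u then 1
     else if v = seq_minus s u then -1
     else if u < v \<and> v < seq_plus s u \<and> seq_plus s u < seq_plus s v then C (s u) (s v)
     else if v < u \<and> u < seq_plus s v \<and> seq_plus s v < seq_plus s u then - C (s u) (s v)
     else 0)"

definition Lambda_matrix ::
  "('i \<Rightarrow> 'i \<Rightarrow> int) \<Rightarrow> (('i \<Rightarrow> int) \<Rightarrow> ('i \<Rightarrow> int) \<Rightarrow> rat) \<Rightarrow> (nat \<Rightarrow> 'i) \<Rightarrow> nat \<Rightarrow> nat \<Rightarrow> rat" where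
  "Lambda_matrix C form s u v =
    (if u = 0 \<or> v = 0 then 0
     else if u \<le> v then
       form (fund_wt (s u) - weyl_act C s u (fund_wt (s u)))
            (fund_wt (s v) + weyl_act C s v (fund_wt (s v)))
     else
       - form (fund_wt (s v) - weyl_act C s v (fund_wt (s v)))
              (fund_wt (s u) + weyl_act C s u (fund_wt (s u))))"

text \<open>Product of N-indexed matrices (finitely supported sums, as in the paper's setting).\<close>
definition mat_mult :: "(nat \<Rightarrow> nat \<Rightarrow> 'a::comm_semiring_1) \<Rightarrow> (nat \<Rightarrow> nat \<Rightarrow> 'a) \<Rightarrow> nat \<Rightarrow> nat \<Rightarrow> 'a" where
  "mat_mult A B u v = (\<Sum>w. A u w * B w v)"

definition mat_transp :: "(nat \<Rightarrow> nat \<Rightarrow> 'a) \<Rightarrow> nat \<Rightarrow> nat \<Rightarrow> 'a" where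
  "mat_transp A u v = A v u"

definition mut_E :: "(nat \<Rightarrow> nat \<Rightarrow> int) \<Rightarrow> nat \<Rightarrow> nat \<Rightarrow> nat \<Rightarrow> int" where
  "mut_E B k u v =
    (if v \<noteq> k then (if u = v then 1 else 0)
     else if u = k then -1 else max (- B u k) 0)"

definition mut_F :: "(nat \<Rightarrow> nat \<Rightarrow> int) \<Rightarrow> nat \<Rightarrow> nat \<Rightarrow> nat \<Rightarrow> int" where
  "mut_F B k u v =
    (if u \<noteq> k then (if u = v then 1 else 0)
     else if v = k then -1 else max (B k v) 0)"

definition mutate :: "nat \<Rightarrow> (nat \<Rightarrow> nat \<Rightarrow> rat) \<times> (nat \<Rightarrow> nat \<Rightarrow> int)
                      \<Rightarrow> (nat \<Rightarrow> nat \<Rightarrow> rat) \<times> (nat \<Rightarrow> nat \<Rightarrow> int)" where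
  "mutate k LB = (let L = fst LB; B = snd LB;
                      E = mut_E B k; F = mut_F B k;
                      Eq = (\<lambda>u v. of_int (E u v) :: rat)
                  in (mat_mult (mat_transp Eq) (mat_mult L Eq), mat_mult (mat_mult E B) F))"

definition perm_mat :: "(nat \<Rightarrow> nat) \<Rightarrow> (nat \<Rightarrow> nat \<Rightarrow> 'a) \<Rightarrow> nat \<Rightarrow> nat \<Rightarrow> 'a" where
  "perm_mat p M u v = M (inv p u) (inv p v)"

definition perm_pair :: "(nat \<Rightarrow> nat) \<Rightarrow> (nat \<Rightarrow> nat \<Rightarrow> rat) \<times> (nat \<Rightarrow> nat \<Rightarrow> int)
                      \<Rightarrow> (nat \<Rightarrow> nat \<Rightarrow> rat) \<times> (nat \<Rightarrow> nat \<Rightarrow> int)" where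
  "perm_pair p LB = (perm_mat p (fst LB), perm_mat p (snd LB))"

definition sigma :: "nat \<Rightarrow> nat \<Rightarrow> nat" where
  "sigma k = transpose k (k + 1)"

definition four_move :: "('i \<Rightarrow> 'i \<Rightarrow> int) \<Rightarrow> nat \<Rightarrow> (nat \<Rightarrow> 'i) \<Rightarrow> (nat \<Rightarrow> 'i) \<Rightarrow> bool" where
  "four_move C k s s' \<longleftrightarrow>
     s k = s (k+2) \<and> s (k+2) = s' (k+1) \<and> s' (k+1) = s' (k+3) \<and>
     s (k+1) = s (k+3) \<and> s (k+3) = s' k \<and> s' k = s' (k+2) \<and>
     (\<forall>u. 1 \<le> u \<and> (u < k \<or> k + 3 < u) \<longrightarrow> s u = s' u) \<and>
     C (s (k+1)) (s k) * C (s k) (s (k+1)) = 2"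

end

theory Submission
  imports Defs
begin

text \<open>
  Before position \<open>k\<close> both sequences have the
  same prefix \<open>p = w\<^sub>k\<^sub>-\<^sub>1\<close>, and from position \<open>k + 3\<close> on they have the same prefixes because
  \<open>c\<^sub>a\<^sub>b c\<^sub>b\<^sub>a = 2\<close> gives the braid relation \<open>s\<^sub>as\<^sub>bs\<^sub>as\<^sub>b = s\<^sub>bs\<^sub>as\<^sub>bs\<^sub>a\<close>; so the two matrices
  agree away from the window \<open>k, \<dots>, k + 3\<close>. In the window all weights are \<open>\<varpi>\<close> plus \<open>p\<close> applied to
  explicit elements of the rank-2 lattice spanned by \<open>\<varpi>\<^sub>a, \<varpi>\<^sub>b, \<alpha>\<^sub>a, \<alpha>\<^sub>b\<close>.

  On the mutation side, the relevant columns of the three exchange matrices are explicit, so each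
  mutation replaces row and column \<open>k\<close> (resp. \<open>k + 1\<close>) by a combination of three rows and columns
  (indices \<open>k, k + 2, (k + 1)\<^sup>-\<close>, then \<open>k + 1, k + 3, (k + 1)\<^sup>-\<close>, then \<open>k, k + 3, k\<^sup>-\<close>). For almost all
  entries the required identity is then a linear relation between the rank-2 weights, which holds
  in the lattice itself; only the entry \<open>(k, k + 1)\<close> and the antisymmetry of the pair
  \<open>(k + 2, k + 3)\<close> need the values of the form.
\<close>

section \<open>Mutation of a pair \<open>(\<Lambda>, B)\<close>\<close>

text \<open>Any of \<open>x, y, z\<close> may be the dummy index \<open>0\<close> (a missing previous occurrence); this is harmless
  because \<open>f 0 = 0\<close>.\<close>
lemma Sum_any_three_point:
  fixes e f :: "nat \<Rightarrow> 'a::comm_semiring_1"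
  assumes "distinct [x, y, z]" "f 0 = 0"
    and "\<And>w. w \<noteq> 0 \<Longrightarrow> e w = (if w = x then a else if w = y then b else if w = z then c else 0)"
  shows "Sum_any (\<lambda>w. e w * f w) = a * f x + b * f y + c * f z"
proof -
  have "e w * f w = 0" if "w \<notin> {x, y, z}" for w
    using that assms(2,3) by (cases "w = 0") auto
  then have "Sum_any (\<lambda>w. e w * f w) = (\<Sum>w\<in>{x, y, z}. e w * f w)"
    by (intro Sum_any.expand_superset) auto
  also have "\<dots> = a * f x + b * f y + c * f z"
    using assms by (cases "x = 0"; cases "y = 0"; cases "z = 0") (auto simp: add.assoc)
  finally show ?thesis .
qed

definition skew_matrix :: "(nat \<Rightarrow> nat \<Rightarrow> 'a::ab_group_add) \<Rightarrow> bool" where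
  "skew_matrix L \<longleftrightarrow> (\<forall>u v. L u v = - L v u)"

definition zero_border :: "(nat \<Rightarrow> nat \<Rightarrow> 'a::zero) \<Rightarrow> bool" where
  "zero_border L \<longleftrightarrow> (\<forall>v. L 0 v = 0) \<and> (\<forall>u. L u 0 = 0)"

text \<open>Column \<open>k\<close> of the matrix \<open>E\<close> of a mutation at \<open>k\<close>; all other columns of \<open>E\<close> are unit vectors.\<close>
definition mutation_column :: "(nat \<Rightarrow> nat \<Rightarrow> int) \<Rightarrow> nat \<Rightarrow> nat \<Rightarrow> rat" where
  "mutation_column B k w = of_int (mut_E B k w k)"

lemma mutation_column_eq:
  "mutation_column B k w = (if w = k then -1 else of_int (max (- B w k) 0))"
  by (simp add: mutation_column_def mut_E_def)

lemma fst_mutate: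
  "fst (mutate k (L, B)) u v =
    (if u \<noteq> k then (if v \<noteq> k then L u v else Sum_any (\<lambda>x. mutation_column B k x * L u x))
     else Sum_any (\<lambda>w. mutation_column B k w *
            (if v \<noteq> k then L w v else Sum_any (\<lambda>x. mutation_column B k x * L w x))))"
proof -
  define E where "E = (\<lambda>u v. of_int (mut_E B k u v) :: rat)"
  have E_col: "E w k = mutation_column B k w" for w
    by (simp add: E_def mutation_column_def)
  have E_off: "w \<noteq> k \<Longrightarrow> E x w = (if x = w then 1 else 0)" for x w
    by (simp add: E_def mut_E_def)
  have delta: "Sum_any (\<lambda>x. (if x = w then 1 else 0) * f x) = f w" for w and f :: "nat \<Rightarrow> rat"
    by (simp add: if_distrib[of "\<lambda>y. y * _"] cong: if_cong)
  have LE: "mat_mult L E w v =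
      (if v \<noteq> k then L w v else Sum_any (\<lambda>x. mutation_column B k x * L w x))" for w
  proof (cases "v = k")
    case True
    then show ?thesis by (simp add: mat_mult_def E_col mult.commute)
  next
    case False
    then show ?thesis using delta[of v "L w"] by (simp add: mat_mult_def E_off mult.commute)
  qed
  have M: "fst (mutate k (L, B)) u v = Sum_any (\<lambda>w. E w u * mat_mult L E w v)"
    by (simp add: mutate_def Let_def E_def mat_mult_def[of "mat_transp _"] mat_transp_def)
  show ?thesis
  proof (cases "u = k")
    case True
    then show ?thesis unfolding M LE by (simp add: E_col)
  next
    case False
    then show ?thesis unfolding M LE E_off[OF False] delta by simp
  qed
qed

lemma snd_mutate:
  assumes "B k k = 0"
  shows "snd (mutate k (L, B)) u v =
    (if u = k \<or> v = k then - B u v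
     else B u v + max (- B u k) 0 * B k v + B u k * max (B k v) 0)"
proof -
  define EB where "EB w = (if u = k then - B k w else B u w + max (- B u k) 0 * B k w)" for w
  have "mat_mult (mut_E B k) B u w = (\<Sum>x\<in>{u, k}. mut_E B k u x * B x w)" for w
    unfolding mat_mult_def by (rule Sum_any.expand_superset) (auto simp: mut_E_def)
  then have EB: "mat_mult (mut_E B k) B u w = EB w" for w
    by (cases "u = k") (auto simp: mut_E_def EB_def)
  have "snd (mutate k (L, B)) u v = (\<Sum>w\<in>{v, k}. EB w * mut_F B k w v)"
    unfolding mutate_def Let_def snd_conv mat_mult_def[of "mat_mult _ _"] EB
    by (rule Sum_any.expand_superset) (auto simp: mut_F_def)
  then show ?thesis
    using assms by (cases "v = k") (auto simp: mut_F_def EB_def algebra_simps)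
qed

lemma skew_matrix_fst_mutate_pair:
  assumes skew: "skew_matrix L" and fin: "finite {w. mutation_column B k w \<noteq> 0}"
  shows "skew_matrix (fst (mutate k (L, B)))"
  unfolding skew_matrix_def
proof (intro allI)
  fix u v
  define S where "S = {w. mutation_column B k w \<noteq> 0}"
  let ?e = "mutation_column B k"
  have L: "L x y = - L y x" for x y
    using skew unfolding skew_matrix_def by blast
  have sum_S: "Sum_any (\<lambda>w. ?e w * f w) = (\<Sum>w\<in>S. ?e w * f w)" for f :: "nat \<Rightarrow> rat"
    using fin by (intro Sum_any.expand_superset) (auto simp: S_def)
  have row_col: "(\<Sum>w\<in>S. ?e w * L x w) = - (\<Sum>w\<in>S. ?e w * L w x)" for x
    unfolding sum_negf[symmetric] by (intro sum.cong refl) (subst L, simp)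
  have "(\<Sum>w\<in>S. ?e w * (\<Sum>x\<in>S. ?e x * L w x)) = (\<Sum>w\<in>S. \<Sum>x\<in>S. ?e w * ?e x * L w x)"
    by (simp add: sum_distrib_left mult.assoc)
  also have "\<dots> = (\<Sum>x\<in>S. \<Sum>w\<in>S. ?e w * ?e x * L w x)"
    by (rule sum.swap)
  also have "\<dots> = (\<Sum>x\<in>S. \<Sum>w\<in>S. - (?e x * ?e w * L x w))"
    by (intro sum.cong refl) (subst L, simp)
  also have "\<dots> = - (\<Sum>w\<in>S. ?e w * (\<Sum>x\<in>S. ?e x * L w x))"
    by (simp add: sum_distrib_left sum_negf mult.assoc)
  finally have diag: "(\<Sum>w\<in>S. ?e w * (\<Sum>x\<in>S. ?e x * L w x)) = 0"
    by simp
  show "fst (mutate k (L, B)) u v = - fst (mutate k (L, B)) v u"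
    unfolding fst_mutate sum_S using diag L[of u v] row_col[of u] row_col[of v] by auto
qed

lemma skew_matrix_fst_mutate:
  "skew_matrix (fst X) \<Longrightarrow> finite {w. mutation_column (snd X) k w \<noteq> 0} \<Longrightarrow>
    skew_matrix (fst (mutate k X))"
  using skew_matrix_fst_mutate_pair[of "fst X" "snd X" k] by simp

lemma zero_border_fst_mutate:
  assumes "zero_border (fst X)" "k \<noteq> 0"
  shows "zero_border (fst (mutate k X))"
  using assms fst_mutate[of k "fst X" "snd X"] unfolding zero_border_def by auto

lemma fst_mutate_three_point:
  assumes "distinct [k, y, z]" "zero_border L"
    and col: "\<And>w. w \<noteq> 0 \<Longrightarrow>
      mutation_column B k w = (if w = k then -1 else if w = y then b else if w = z then c else 0)"
  shows "u \<noteq> k \<Longrightarrow> v \<noteq> k \<Longrightarrow> fst (mutate k (L, B)) u v = L u v"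
    and "v \<noteq> k \<Longrightarrow> fst (mutate k (L, B)) k v = - L k v + b * L y v + c * L z v"
    and "u \<noteq> k \<Longrightarrow> fst (mutate k (L, B)) u k = - L u k + b * L u y + c * L u z"
proof -
  have sum: "f 0 = 0 \<Longrightarrow> Sum_any (\<lambda>w. mutation_column B k w * f w) = - f k + b * f y + c * f z"
    for f :: "nat \<Rightarrow> rat"
    using Sum_any_three_point[OF assms(1) _ col] by simp
  show "u \<noteq> k \<Longrightarrow> v \<noteq> k \<Longrightarrow> fst (mutate k (L, B)) u v = L u v"
    by (simp add: fst_mutate)
  show "v \<noteq> k \<Longrightarrow> fst (mutate k (L, B)) k v = - L k v + b * L y v + c * L z v"
    using sum[of "\<lambda>w. L w v"] assms(2) by (simp add: fst_mutate zero_border_def)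
  show "u \<noteq> k \<Longrightarrow> fst (mutate k (L, B)) u k = - L u k + b * L u y + c * L u z"
    using sum[of "L u"] assms(2) by (simp add: fst_mutate zero_border_def)
qed

section \<open>Previous and next occurrences\<close>

lemma in_I_infty_next_occurrence:
  assumes "in_I_infty s"
  shows "\<exists>v>u. s v = s u"
proof -
  have "infinite {v. 1 \<le> v \<and> s v = s u}"
    using assms unfolding in_I_infty_def by blast
  then have "\<not> {v. 1 \<le> v \<and> s v = s u} \<subseteq> {..u}"
    using finite_subset by blast
  then show ?thesis by (auto simp: not_le)
qed

lemma
  assumes "in_I_infty s"
  shows seq_plus_gt: "u < seq_plus s u"
    and seq_plus_same: "s (seq_plus s u) = s u"
    and seq_plus_least: "u < t \<Longrightarrow> t < seq_plus s u \<Longrightarrow> s t \<noteq> s u"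
proof -
  obtain v where "u < v \<and> s v = s u"
    using in_I_infty_next_occurrence[OF assms] by blast
  then show "u < seq_plus s u" "s (seq_plus s u) = s u"
    unfolding seq_plus_def by (metis (mono_tags, lifting) LeastI)+
  show "u < t \<Longrightarrow> t < seq_plus s u \<Longrightarrow> s t \<noteq> s u"
    unfolding seq_plus_def using not_less_Least by blast
qed

lemma seq_plus_eqI:
  assumes "u < v" "s v = s u" "\<And>t. u < t \<Longrightarrow> t < v \<Longrightarrow> s t \<noteq> s u"
  shows "seq_plus s u = v"
  unfolding seq_plus_def using assms by (intro Least_equality) (auto simp: not_le[symmetric])

lemma seq_minus_set_finite: "finite ({v. 0 < v \<and> v < u \<and> s v = s u} \<union> {0 :: nat})"
  by (rule finite_subset[of _ "{..u}"]) auto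

lemma seq_minus_cases:
  "seq_minus s u = 0 \<or> 0 < seq_minus s u \<and> seq_minus s u < u \<and> s (seq_minus s u) = s u"
  using Max_in[OF seq_minus_set_finite] unfolding seq_minus_def by blast

lemma seq_minus_greatest: "seq_minus s u < t \<Longrightarrow> t < u \<Longrightarrow> s t \<noteq> s u"
  using Max_ge[OF seq_minus_set_finite, of t u s] unfolding seq_minus_def by auto

lemma seq_minus_eqI:
  assumes "v = 0 \<or> 0 < v \<and> v < u \<and> s v = s u" "\<And>t. v < t \<Longrightarrow> t < u \<Longrightarrow> s t \<noteq> s u"
  shows "seq_minus s u = v"
  unfolding seq_minus_def using assms
  by (intro Max_eqI[OF seq_minus_set_finite]) (auto, metis not_le)

lemma seq_minus_seq_plus:
  assumes "in_I_infty s" "0 < u"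
  shows "seq_minus s (seq_plus s u) = u"
  using assms seq_plus_gt seq_plus_same seq_plus_least by (intro seq_minus_eqI) fastforce+

lemma seq_plus_seq_minus:
  assumes "seq_minus s v \<noteq> 0"
  shows "seq_plus s (seq_minus s v) = v"
  using assms seq_minus_cases[of s v] seq_minus_greatest[of s v] by (intro seq_plus_eqI) auto

lemma exch_matrix_diag:
  assumes "in_I_infty s"
  shows "exch_matrix C s u u = 0"
  using seq_plus_gt[OF assms, of u] seq_minus_cases[of s u] by (auto simp: exch_matrix_def)

section \<open>Weights, reflections and the invariant form\<close>

lemma of_int_fun_apply [simp]: "(of_int n :: 'a \<Rightarrow> 'b::ring_1) x = of_int n"
  by (induct n rule: int_induct[where k = 0]) simp_all

lemma srefl_eq: "srefl C i x = x - of_int (x i) * simple_root C i"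
  by (simp add: srefl_def simple_root_def fun_eq_iff)

lemma srefl_fund_wt: "srefl C i (fund_wt j) = (if j = i then fund_wt i - simple_root C i else fund_wt j)"
  by (auto simp: srefl_eq fund_wt_def)

lemma
  shows srefl_add: "srefl C i (x + y) = srefl C i x + srefl C i y"
    and srefl_diff: "srefl C i (x - y) = srefl C i x - srefl C i y"
    and srefl_mult_of_int: "srefl C i (of_int n * x) = of_int n * srefl C i x"
  by (simp_all add: srefl_def fun_eq_iff algebra_simps)

lemma
  shows weyl_act_add: "weyl_act C s u (x + y) = weyl_act C s u x + weyl_act C s u y"
    and weyl_act_diff: "weyl_act C s u (x - y) = weyl_act C s u x - weyl_act C s u y"
    and weyl_act_mult_of_int: "weyl_act C s u (of_int n * x) = of_int n * weyl_act C s u x"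
  by (induct u arbitrary: x y) (simp_all add: srefl_add srefl_diff srefl_mult_of_int)

lemma weyl_act_mult_numeral: "weyl_act C s u (numeral n * x) = numeral n * weyl_act C s u x"
  using weyl_act_mult_of_int[of C s u "numeral n" x] by simp

lemmas weyl_act_linear = weyl_act_add weyl_act_diff weyl_act_mult_of_int weyl_act_mult_numeral

lemma weyl_act_fund_wt_unchanged:
  assumes "v \<le> u" "\<And>t. v < t \<Longrightarrow> t \<le> u \<Longrightarrow> s t \<noteq> e"
  shows "weyl_act C s u (fund_wt e) = weyl_act C s v (fund_wt e)"
  using assms
proof (induction u)
  case (Suc u)
  show ?case
  proof (cases "v = Suc u")
    case False
    then have "v \<le> u" "e \<noteq> s (Suc u)"
      using Suc.prems(1) Suc.prems(2)[of "Suc u"] by auto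
    then show ?thesis
      using Suc.IH Suc.prems(2) by (simp add: srefl_fund_wt)
  qed simp
qed simp

lemma weyl_act_cong:
  assumes "\<And>t. 0 < t \<Longrightarrow> t \<le> u \<Longrightarrow> s t = s' t"
  shows "weyl_act C s u = weyl_act C s' u"
  using assms by (induction u) (auto simp: fun_eq_iff)

context
  fixes C :: "'i \<Rightarrow> 'i \<Rightarrow> int" and a b :: 'i
  assumes diag: "C a a = 2" "C b b = 2" and prod: "C a b * C b a = 2"
begin

lemma rank2_distinct: "a \<noteq> b"
  using diag prod by auto

lemma srefl_rank2_step1:
  "srefl C a (fund_wt b - simple_root C b) = fund_wt b - simple_root C b + of_int (C a b) * simple_root C a"
  using rank2_distinct by (auto simp: srefl_def fund_wt_def simple_root_def fun_eq_iff)

lemma srefl_rank2_step2: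
  "srefl C b (fund_wt b - simple_root C b + of_int (C a b) * simple_root C a) =
     fund_wt b - 2 * simple_root C b + of_int (C a b) * simple_root C a"
  using rank2_distinct diag prod
  by (auto simp: srefl_def fund_wt_def simple_root_def fun_eq_iff algebra_simps)

lemma srefl_rank2_step3:
  "srefl C a (fund_wt b - 2 * simple_root C b + of_int (C a b) * simple_root C a) =
     fund_wt b - 2 * simple_root C b + of_int (C a b) * simple_root C a"
  using rank2_distinct diag
  by (auto simp: srefl_def fund_wt_def simple_root_def fun_eq_iff algebra_simps)

lemma srefl_braid:
  "srefl C a (srefl C b (srefl C a (srefl C b x))) = srefl C b (srefl C a (srefl C b (srefl C a x)))"
proof
  fix j
  let ?l = "srefl C a (srefl C b (srefl C a (srefl C b x))) j"
  let ?r = "srefl C b (srefl C a (srefl C b (srefl C a x))) j"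
  have "?l - ?r = (C a b * C b a - 2) * (x b * C a b * C j a - x a * C b a * C j b)"
    unfolding srefl_def diag by algebra
  then show "?l = ?r"
    using prod by simp
qed

end

lemma simple_root_apply: "simple_root C j i = C i j"
  by (simp add: simple_root_def)

lemma fund_wt_apply: "fund_wt i j = (if j = i then 1 else 0)"
  by (simp add: fund_wt_def)

context
  fixes C :: "'i \<Rightarrow> 'i \<Rightarrow> int" and d :: "'i \<Rightarrow> int"
    and form :: "('i \<Rightarrow> int) \<Rightarrow> ('i \<Rightarrow> int) \<Rightarrow> rat"
  assumes inv: "invariant_form C d form"
begin

lemma form_add_left: "form (x + y) z = form x z + form y z"
  and form_commute: "form x y = form y x"
  and form_srefl: "form (srefl C i x) (srefl C i y) = form x y"
  and form_simple_roots: "form (simple_root C i) (simple_root C j) = of_int (d i * C i j)"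
  using inv unfolding invariant_form_def by blast+

lemma form_add_right: "form x (y + z) = form x y + form x z"
  using form_add_left form_commute by metis

lemma form_zero_left: "form 0 z = 0"
  using form_add_left[of 0 0 z] by simp

lemma form_uminus_left: "form (- x) z = - form x z"
  using form_add_left[of x "- x" z] form_zero_left by (simp add: eq_neg_iff_add_eq_0)

lemma form_diff_left: "form (x - y) z = form x z - form y z"
  using form_add_left[of x "- y" z] form_uminus_left by simp

lemma form_mult_of_nat_left: "form (of_nat m * x) z = of_nat m * form x z"
proof (induct m)
  case 0
  show ?case by (simp only: of_nat_0 mult_zero_left form_zero_left)
next
  case (Suc m)
  have "of_nat (Suc m) * x = x + of_nat m * x"
    by (simp add: algebra_simps)
  then have "form (of_nat (Suc m) * x) z = form x z + form (of_nat m * x) z"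
    by (simp only: form_add_left)
  also have "\<dots> = of_nat (Suc m) * form x z"
    by (simp only: Suc) (simp add: algebra_simps)
  finally show ?case .
qed

lemma form_mult_of_int_left: "form (of_int n * x) z = of_int n * form x z"
proof -
  obtain m where "n = int m \<or> n = - int m"
    by (metis int_cases)
  then show ?thesis
    using form_mult_of_nat_left[of m x z] by (auto simp: form_uminus_left)
qed

lemma form_uminus_right: "form z (- x) = - form z x"
  and form_diff_right: "form z (x - y) = form z x - form z y"
  and form_mult_of_int_right: "form z (of_int n * x) = of_int n * form z x"
  using form_uminus_left form_diff_left form_mult_of_int_left form_commute by metis+

lemma form_mult_numeral_left: "form (numeral n * x) z = numeral n * form x z"
  and form_mult_numeral_right: "form z (numeral n * x) = numeral n * form z x"
  using form_mult_of_int_left[of "numeral n"] form_mult_of_int_right[of _ "numeral n"] by simp_all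

lemmas form_bilinear = form_add_left form_add_right form_diff_left form_diff_right
  form_uminus_left form_uminus_right
  form_mult_of_int_left form_mult_of_int_right form_mult_numeral_left form_mult_numeral_right

lemma form_weyl_act: "form (weyl_act C s u x) (weyl_act C s u y) = form x y"
  by (induction u arbitrary: x y) (simp_all add: form_srefl)

lemma form_fund_wt_simple_root:
  assumes "C j j = 2"
  shows "form (fund_wt i) (simple_root C j) = (if i = j then of_int (d i) else 0)"
proof (cases "i = j")
  case False
  have "form (fund_wt i) (simple_root C j) = form (srefl C j (fund_wt i)) (srefl C j (simple_root C j))"
    by (simp add: form_srefl)
  also have "\<dots> = - form (fund_wt i) (simple_root C j)"
    using False assms
    by (simp add: srefl_fund_wt srefl_eq form_diff_right form_mult_numeral_right form_uminus_right
        simple_root_apply fund_wt_apply)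
  finally show ?thesis
    using False by simp
next
  case True
  have "form (fund_wt i) (fund_wt i) = form (srefl C i (fund_wt i)) (srefl C i (fund_wt i))"
    by (simp add: form_srefl)
  also have "\<dots> = form (fund_wt i) (fund_wt i) - 2 * form (fund_wt i) (simple_root C i)
      + form (simple_root C i) (simple_root C i)"
    by (simp add: srefl_fund_wt form_bilinear form_commute[of "simple_root C i" "fund_wt i"])
  finally show ?thesis
    using True assms by (simp add: form_simple_roots)
qed

lemma form_weyl_act_swap:
  "form (x - weyl_act C s u x) (z + weyl_act C s u z) = - form (z - weyl_act C s u z) (x + weyl_act C s u x)"
proof -
  have "form (x - weyl_act C s u x) (z + weyl_act C s u z) =
      form x (weyl_act C s u z) - form (weyl_act C s u x) z"
    unfolding form_diff_left form_add_right form_weyl_act by simp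
  moreover have "form (z - weyl_act C s u z) (x + weyl_act C s u x) =
      form z (weyl_act C s u x) - form (weyl_act C s u z) x"
    unfolding form_diff_left form_add_right form_weyl_act by simp
  ultimately show ?thesis
    using form_commute[of x "weyl_act C s u z"] form_commute[of z "weyl_act C s u x"]
      form_commute[of z x] by simp
qed

end

section \<open>The matrix \<open>\<Lambda>\<close>\<close>

definition wt_diff :: "('i \<Rightarrow> 'i \<Rightarrow> int) \<Rightarrow> (nat \<Rightarrow> 'i) \<Rightarrow> nat \<Rightarrow> 'i \<Rightarrow> int" where
  "wt_diff C t u = fund_wt (t u) - weyl_act C t u (fund_wt (t u))"

definition wt_sum :: "('i \<Rightarrow> 'i \<Rightarrow> int) \<Rightarrow> (nat \<Rightarrow> 'i) \<Rightarrow> nat \<Rightarrow> 'i \<Rightarrow> int" where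
  "wt_sum C t u = fund_wt (t u) + weyl_act C t u (fund_wt (t u))"

lemma Lambda_matrix_le: "0 < u \<Longrightarrow> u \<le> v \<Longrightarrow> Lambda_matrix C form t u v = form (wt_diff C t u) (wt_sum C t v)"
  and Lambda_matrix_gt: "0 < v \<Longrightarrow> v < u \<Longrightarrow> Lambda_matrix C form t u v = - form (wt_diff C t v) (wt_sum C t u)"
  by (simp_all add: Lambda_matrix_def wt_diff_def wt_sum_def)

lemma zero_border_Lambda_matrix: "zero_border (Lambda_matrix C form t)"
  by (simp add: zero_border_def Lambda_matrix_def)

lemma skew_matrix_Lambda_matrix:
  assumes "invariant_form C d form"
  shows "skew_matrix (Lambda_matrix C form t)"
  unfolding skew_matrix_def
proof (intro allI)
  fix u v
  show "Lambda_matrix C form t u v = - Lambda_matrix C form t v u"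
    using form_weyl_act_swap[OF assms, of "fund_wt (t u)" t u "fund_wt (t u)"]
    by (simp add: Lambda_matrix_def)
qed

lemma Lambda_matrix_diag:
  assumes "invariant_form C d form"
  shows "Lambda_matrix C form t x x = 0"
  using skew_matrix_Lambda_matrix[OF assms, of t] unfolding skew_matrix_def by (metis neg_equal_zero)

text \<open>If \<open>m\<close> is the last occurrence of \<open>e\<close> up to \<open>K\<close> (or \<open>0\<close> if there is none), row \<open>m\<close> of \<open>\<Lambda>\<close> sees
  \<open>w\<^sub>m\<varpi>\<^sub>e\<close> only, and that equals \<open>w\<^sub>K\<varpi>\<^sub>e\<close>.\<close>
lemma Lambda_matrix_last_occurrence:
  assumes inv: "invariant_form C d form"
    and last: "m \<le> K" "\<And>t. m < t \<Longrightarrow> t \<le> K \<Longrightarrow> s t \<noteq> e" "m \<noteq> 0 \<Longrightarrow> s m = e"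
  shows "K < v \<Longrightarrow> Lambda_matrix C form s m v =
      form (fund_wt e - weyl_act C s K (fund_wt e)) (wt_sum C s v)"
    and "0 < v \<Longrightarrow> v \<le> K \<Longrightarrow> Lambda_matrix C form s m v =
      - form (wt_diff C s v) (fund_wt e + weyl_act C s K (fund_wt e))"
proof -
  have m: "weyl_act C s K (fund_wt e) = weyl_act C s m (fund_wt e)"
    using last by (intro weyl_act_fund_wt_unchanged) auto
  show "K < v \<Longrightarrow> Lambda_matrix C form s m v =
      form (fund_wt e - weyl_act C s K (fund_wt e)) (wt_sum C s v)"
    using last m by (cases "m = 0") (simp_all add: Lambda_matrix_def wt_sum_def form_zero_left[OF inv])
  assume v: "0 < v" "v \<le> K"
  show "Lambda_matrix C form s m v = - form (wt_diff C s v) (fund_wt e + weyl_act C s K (fund_wt e))"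
  proof (cases "m \<le> v")
    case True
    then have "weyl_act C s K (fund_wt e) = weyl_act C s v (fund_wt e)"
      using last v by (intro weyl_act_fund_wt_unchanged) auto
    then show ?thesis
      using True m v last form_weyl_act_swap[OF inv, of "fund_wt e" s v "fund_wt (s v)"]
      by (cases "m = 0") (simp_all add: Lambda_matrix_def wt_diff_def form_zero_left[OF inv])
  next
    case False
    then show ?thesis
      using m last v by (simp add: Lambda_matrix_def wt_diff_def)
  qed
qed

section \<open>A 4-move\<close>

locale four_move_setting =
  fixes C :: "'i::finite \<Rightarrow> 'i \<Rightarrow> int" and d :: "'i \<Rightarrow> int"
    and form :: "('i \<Rightarrow> int) \<Rightarrow> ('i \<Rightarrow> int) \<Rightarrow> rat"
    and s s' :: "nat \<Rightarrow> 'i" and k :: nat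
  assumes cartan: "cartan_of_simple_lie_algebra C"
    and symmetrizer: "is_min_symmetrizer C d"
    and inv: "invariant_form C d form"
    and infinite_s: "in_I_infty s"
    and k_pos: "1 \<le> k"
    and move: "four_move C k s s'"
begin

abbreviation "a \<equiv> s k"
abbreviation "b \<equiv> s (Suc k)"
abbreviation "cab \<equiv> C a b"
abbreviation "cba \<equiv> C b a"

lemma letters:
  "s (k + 2) = a" "s (k + 3) = b" "s' k = b" "s' (Suc k) = a" "s' (k + 2) = b" "s' (k + 3) = a"
  using move unfolding four_move_def by auto

lemma letters_outside: "0 < u \<Longrightarrow> u < k \<or> k + 3 < u \<Longrightarrow> s' u = s u"
  using move unfolding four_move_def by auto

lemma cartan_diag: "C i i = 2"
  and cartan_offdiag: "i \<noteq> j \<Longrightarrow> C i j \<le> 0"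
  using cartan unfolding cartan_of_simple_lie_algebra_def by (elim conjE, simp)+

lemma symmetrizer_eq: "d i * C i j = d j * C j i"
  using symmetrizer unfolding is_min_symmetrizer_def is_left_symmetrizer_def by (elim conjE, simp)

lemma cab_cba: "cab * cba = 2"
  using move unfolding four_move_def Suc_eq_plus1 by (metis mult.commute)

lemma a_neq_b: "a \<noteq> b"
  using cab_cba cartan_diag[of a] by auto

lemma cab_neg: "cab < 0" and cba_neg: "cba < 0"
proof -
  have "cab \<noteq> 0" "cba \<noteq> 0"
    using cab_cba by auto
  then show "cab < 0" "cba < 0"
    using cartan_offdiag[OF a_neq_b] cartan_offdiag[OF a_neq_b[symmetric]] by (simp_all add: less_le)
qed

definition alpha :: nat where "alpha = seq_minus s k"
definition beta :: nat where "beta = seq_minus s (Suc k)"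

lemma alpha_lt: "alpha < k"
  and alpha_letter: "alpha \<noteq> 0 \<Longrightarrow> s alpha = a"
  and alpha_last: "alpha < t \<Longrightarrow> t < k \<Longrightarrow> s t \<noteq> a"
  using seq_minus_cases[of s k] seq_minus_greatest[of s k] k_pos unfolding alpha_def by auto

lemma beta_lt: "beta < k"
  and beta_letter: "beta \<noteq> 0 \<Longrightarrow> s beta = b"
  and beta_last: "beta < t \<Longrightarrow> t < Suc k \<Longrightarrow> s t \<noteq> b"
proof -
  have cases: "beta = 0 \<or> 0 < beta \<and> beta < Suc k \<and> s beta = b"
    using seq_minus_cases[of s "Suc k"] unfolding beta_def .
  then show "beta \<noteq> 0 \<Longrightarrow> s beta = b"
    by auto
  show "beta < t \<Longrightarrow> t < Suc k \<Longrightarrow> s t \<noteq> b"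
    using seq_minus_greatest[of s "Suc k"] unfolding beta_def by auto
  show "beta < k"
    using cases a_neq_b k_pos by (cases "beta = k") auto
qed

lemma alpha_neq_beta: "alpha \<noteq> 0 \<Longrightarrow> alpha \<noteq> beta"
  using alpha_letter beta_letter a_neq_b by metis

lemma between_k: "k < t \<Longrightarrow> t < k + 2 \<Longrightarrow> t = Suc k"
  and between_Suc_k: "Suc k < t \<Longrightarrow> t < k + 3 \<Longrightarrow> t = k + 2"
  by arith+

lemma seq_plus_k: "seq_plus s k = k + 2"
proof (rule seq_plus_eqI)
  show "s t \<noteq> s k" if "k < t" "t < k + 2" for t
    using between_k[OF that] a_neq_b by simp
qed (use letters in simp_all)

lemma seq_plus_Suc_k: "seq_plus s (Suc k) = k + 3"
proof (rule seq_plus_eqI)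
  show "s t \<noteq> s (Suc k)" if "Suc k < t" "t < k + 3" for t
    using between_Suc_k[OF that] letters(1) a_neq_b by simp
qed (use letters in simp_all)

lemma seq_minus_k2: "seq_minus s (k + 2) = k"
proof (rule seq_minus_eqI)
  show "s t \<noteq> s (k + 2)" if "k < t" "t < k + 2" for t
    using between_k[OF that] letters(1) a_neq_b by simp
qed (use letters k_pos in simp_all)

lemma seq_minus_k3: "seq_minus s (k + 3) = Suc k"
proof (rule seq_minus_eqI)
  show "s t \<noteq> s (k + 3)" if "Suc k < t" "t < k + 3" for t
    using between_Suc_k[OF that] letters(1,2) a_neq_b by simp
qed (use letters in simp_all)

lemma seq_plus_k2: "k + 3 < seq_plus s (k + 2)"
  using seq_plus_gt[OF infinite_s, of "k + 2"] seq_plus_same[OF infinite_s, of "k + 2"] letters a_neq_b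
  by (cases "seq_plus s (k + 2) = k + 3") auto

lemma seq_plus_k3: "k + 3 < seq_plus s (k + 3)"
  using seq_plus_gt[OF infinite_s] by simp

lemma seq_plus_alpha: "alpha \<noteq> 0 \<Longrightarrow> seq_plus s alpha = k"
  unfolding alpha_def by (rule seq_plus_seq_minus)

lemma seq_plus_beta: "beta \<noteq> 0 \<Longrightarrow> seq_plus s beta = Suc k"
  unfolding beta_def by (rule seq_plus_seq_minus)

lemma exch_matrix_col_k:
  assumes "0 < u"
  shows "exch_matrix C s u k =
    (if u = alpha then 1 else if u = beta then cba else if u = Suc k then - cba
     else if u = k + 2 then -1 else 0)"
proof -
  consider "u = alpha" | "u = beta" | "u = Suc k" | "u = k + 2"
    | "u \<noteq> alpha" "u \<noteq> beta" "u \<noteq> Suc k" "u \<noteq> k + 2"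
    by blast
  then show ?thesis
  proof cases
    case 1
    then show ?thesis
      using assms seq_plus_alpha k_pos by (simp add: exch_matrix_def)
  next
    case 2
    have "seq_minus s beta < beta"
      using seq_minus_cases[of s beta] 2 assms by auto
    then show ?thesis
      using 2 assms seq_plus_beta seq_plus_k beta_lt beta_letter alpha_neq_beta
      by (auto simp: exch_matrix_def)
  next
    case 3
    have "seq_minus s (Suc k) \<noteq> k"
      using beta_lt unfolding beta_def by simp
    then show ?thesis
      using 3 seq_plus_Suc_k seq_plus_k alpha_lt beta_lt
      by (auto simp: exch_matrix_def)
  next
    case 4
    then show ?thesis
      using seq_plus_k2 seq_minus_k2 alpha_lt beta_lt by (auto simp: exch_matrix_def)
  next
    case 5
    have "k \<noteq> seq_plus s u"
      using seq_minus_seq_plus[OF infinite_s assms] 5(1) unfolding alpha_def by metis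
    moreover have "k \<noteq> seq_minus s u"
      using seq_plus_seq_minus[of s u] seq_plus_k k_pos 5(4) by fastforce
    moreover have "seq_plus s u \<noteq> Suc k"
      using seq_minus_seq_plus[OF infinite_s assms] 5(2) unfolding beta_def by metis
    ultimately show ?thesis
      using 5 assms seq_plus_k by (auto simp: exch_matrix_def)
  qed
qed

lemma exch_matrix_col_Suc_k:
  assumes "0 < u"
  shows "exch_matrix C s u (Suc k) =
    (if u = beta then 1 else if u = k then cab else if u = k + 2 then - cab
     else if u = k + 3 then -1 else 0)"
proof -
  consider "u = beta" | "u = k" | "u = k + 2" | "u = k + 3"
    | "u \<noteq> beta" "u \<noteq> k" "u \<noteq> k + 2" "u \<noteq> k + 3"
    by blast
  then show ?thesis
  proof cases
    case 1
    then show ?thesis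
      using assms seq_plus_beta by (simp add: exch_matrix_def)
  next
    case 2
    have "seq_minus s k \<noteq> Suc k"
      using alpha_lt unfolding alpha_def by simp
    then show ?thesis
      using 2 seq_plus_Suc_k seq_plus_k beta_lt k_pos by (auto simp: exch_matrix_def)
  next
    case 3
    then show ?thesis
      using seq_plus_k2 seq_minus_k2 seq_plus_Suc_k beta_lt letters by (auto simp: exch_matrix_def)
  next
    case 4
    then show ?thesis
      using seq_plus_k3 seq_minus_k3 beta_lt by (auto simp: exch_matrix_def)
  next
    case 5
    have "Suc k \<noteq> seq_plus s u"
      using seq_minus_seq_plus[OF infinite_s assms] 5(1) unfolding beta_def by metis
    moreover have "Suc k \<noteq> seq_minus s u"
      using seq_plus_seq_minus[of s u] seq_plus_Suc_k 5(4) by fastforce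
    moreover have "seq_plus s u \<noteq> k + 2"
      using seq_minus_seq_plus[OF infinite_s assms] seq_minus_k2 5(2) by metis
    moreover have "\<not> (Suc k < u \<and> u < k + 3)"
      using between_Suc_k 5(3) by blast
    ultimately show ?thesis
      using 5 assms seq_plus_Suc_k by (auto simp: exch_matrix_def)
  qed
qed

definition seed1 where "seed1 = mutate k (Lambda_matrix C form s, exch_matrix C s)"
definition seed2 where "seed2 = mutate (Suc k) seed1"
definition seed3 where "seed3 = mutate k seed2"

lemma mutation_column_seed0:
  "0 < w \<Longrightarrow> mutation_column (exch_matrix C s) k w =
     (if w = k then -1 else if w = beta then - of_int cba else if w = k + 2 then 1 else 0)"
  using exch_matrix_col_k[of w] alpha_lt beta_lt cba_neg alpha_neq_beta
  by (auto simp: mutation_column_eq)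

lemma snd_seed1:
  "snd seed1 u k = - exch_matrix C s u k"
  "u \<noteq> k \<Longrightarrow> snd seed1 u (Suc k) =
     exch_matrix C s u (Suc k) + max (- exch_matrix C s u k) 0 * cab"
  "snd seed1 k (Suc k) = - cab"
  using exch_matrix_col_Suc_k[of k] cab_neg k_pos beta_lt
  by (simp_all add: seed1_def snd_mutate exch_matrix_diag[OF infinite_s])

lemma snd_seed1_col_Suc_k:
  "0 < u \<Longrightarrow> snd seed1 u (Suc k) =
     (if u = beta then -1 else if u = k then - cab else if u = k + 3 then -1 else 0)"
  using exch_matrix_col_k[of u] exch_matrix_col_Suc_k[of u] snd_seed1 alpha_lt beta_lt
    alpha_neq_beta cab_cba cba_neg
  by (auto simp: algebra_simps)

lemma mutation_column_seed1:
  "0 < w \<Longrightarrow> mutation_column (snd seed1) (Suc k) w =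
     (if w = Suc k then -1 else if w = beta then 1 else if w = k + 3 then 1 else 0)"
  using snd_seed1_col_Suc_k[of w] beta_lt cab_neg by (auto simp: mutation_column_eq)

lemma snd_seed2_col_k:
  "0 < u \<Longrightarrow> snd seed2 u k =
     (if u = alpha then -1 else if u = Suc k then - cba else if u = k + 2 then 1
      else if u = k + 3 then cba else 0)"
proof -
  assume u: "0 < u"
  have diag: "snd seed1 (Suc k) (Suc k) = 0"
    using snd_seed1(2)[of "Suc k"] exch_matrix_col_k[of "Suc k"] exch_matrix_col_Suc_k[of "Suc k"]
      alpha_lt beta_lt cba_neg by simp
  have col: "snd seed1 (Suc k) k = cba"
    using snd_seed1(1) exch_matrix_col_k[of "Suc k"] alpha_lt beta_lt by simp
  have "snd seed2 u k = snd (mutate (Suc k) (fst seed1, snd seed1)) u k"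
    by (simp add: seed2_def)
  also have "\<dots> =
      (if u = Suc k then - cba else - exch_matrix C s u k + max (- snd seed1 u (Suc k)) 0 * cba)"
    unfolding snd_mutate[where B = "snd seed1" and k = "Suc k", OF diag]
    using col cba_neg snd_seed1(1) by simp
  finally have "snd seed2 u k =
      (if u = Suc k then - cba else - exch_matrix C s u k + max (- snd seed1 u (Suc k)) 0 * cba)" .
  then show ?thesis
    using u exch_matrix_col_k[of u] snd_seed1_col_Suc_k[of u] alpha_lt beta_lt alpha_neq_beta cab_neg
    by auto
qed

lemma mutation_column_seed2:
  "0 < w \<Longrightarrow> mutation_column (snd seed2) k w =
     (if w = k then -1 else if w = alpha then 1 else if w = k + 3 then - of_int cba else 0)"
  using snd_seed2_col_k[of w] alpha_lt cba_neg by (auto simp: mutation_column_eq)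

abbreviation "Lam \<equiv> Lambda_matrix C form s"
abbreviation "Lam' \<equiv> Lambda_matrix C form s'"

lemma distinct_k_beta: "distinct [k, beta, k + 2]"
  and distinct_Suc_k_beta: "distinct [Suc k, beta, k + 3]"
  and distinct_k_alpha: "distinct [k, alpha, k + 3]"
  using alpha_lt beta_lt by auto

lemma fst_seed1:
  "u \<noteq> k \<Longrightarrow> v \<noteq> k \<Longrightarrow> fst seed1 u v = Lam u v"
  "v \<noteq> k \<Longrightarrow> fst seed1 k v = - Lam k v - of_int cba * Lam beta v + Lam (k + 2) v"
  "u \<noteq> k \<Longrightarrow> fst seed1 u k = - Lam u k - of_int cba * Lam u beta + Lam u (k + 2)"
  using fst_mutate_three_point[OF distinct_k_beta zero_border_Lambda_matrix mutation_column_seed0]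
  by (simp_all add: seed1_def)

lemma fst_seed2:
  "u \<noteq> Suc k \<Longrightarrow> v \<noteq> Suc k \<Longrightarrow> fst seed2 u v = fst seed1 u v"
  "v \<noteq> Suc k \<Longrightarrow> fst seed2 (Suc k) v = - fst seed1 (Suc k) v + fst seed1 beta v + fst seed1 (k + 3) v"
proof -
  have "zero_border (fst seed1)"
    unfolding seed1_def using k_pos zero_border_Lambda_matrix by (intro zero_border_fst_mutate) auto
  note three_point = fst_mutate_three_point[OF distinct_Suc_k_beta this mutation_column_seed1]
  show "u \<noteq> Suc k \<Longrightarrow> v \<noteq> Suc k \<Longrightarrow> fst seed2 u v = fst seed1 u v"
    "v \<noteq> Suc k \<Longrightarrow> fst seed2 (Suc k) v = - fst seed1 (Suc k) v + fst seed1 beta v + fst seed1 (k + 3) v"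
    using three_point(1,2) by (simp_all add: seed2_def)
qed

lemma fst_seed3:
  "u \<noteq> k \<Longrightarrow> v \<noteq> k \<Longrightarrow> fst seed3 u v = fst seed2 u v"
  "v \<noteq> k \<Longrightarrow> fst seed3 k v = - fst seed2 k v + fst seed2 alpha v - of_int cba * fst seed2 (k + 3) v"
  "u \<noteq> k \<Longrightarrow> fst seed3 u k = - fst seed2 u k + fst seed2 u alpha - of_int cba * fst seed2 u (k + 3)"
proof -
  have "zero_border (fst seed2)"
    unfolding seed2_def seed1_def using k_pos zero_border_Lambda_matrix
    by (intro zero_border_fst_mutate) auto
  note three_point = fst_mutate_three_point[OF distinct_k_alpha this mutation_column_seed2]
  show "u \<noteq> k \<Longrightarrow> v \<noteq> k \<Longrightarrow> fst seed3 u v = fst seed2 u v"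
    "v \<noteq> k \<Longrightarrow> fst seed3 k v = - fst seed2 k v + fst seed2 alpha v - of_int cba * fst seed2 (k + 3) v"
    "u \<noteq> k \<Longrightarrow> fst seed3 u k = - fst seed2 u k + fst seed2 u alpha - of_int cba * fst seed2 u (k + 3)"
    using three_point by (simp_all add: seed3_def)
qed

lemma skew_matrix_seed3: "skew_matrix (fst seed3)"
proof -
  have fin: "finite {w. mutation_column B j w \<noteq> 0}"
    if "\<And>w. 0 < w \<Longrightarrow> mutation_column B j w = (if w = x then e1 else if w = y then e2 else if w = z then e3 else 0)"
    for B j x y z e1 e2 e3
  proof (rule finite_subset[of _ "{0, x, y, z}"])
    show "{w. mutation_column B j w \<noteq> 0} \<subseteq> {0, x, y, z}"
    proof
      fix w
      assume "w \<in> {w. mutation_column B j w \<noteq> 0}"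
      then show "w \<in> {0, x, y, z}"
        using that[of w] by (cases "w = 0") (auto split: if_splits)
    qed
  qed simp
  have "skew_matrix (fst seed1)"
    unfolding seed1_def using skew_matrix_Lambda_matrix[OF inv] fin[OF mutation_column_seed0]
    by (intro skew_matrix_fst_mutate) simp_all
  then have "skew_matrix (fst seed2)"
    unfolding seed2_def using fin[OF mutation_column_seed1] by (rule skew_matrix_fst_mutate)
  then show ?thesis
    unfolding seed3_def using fin[OF mutation_column_seed2] by (rule skew_matrix_fst_mutate)
qed

abbreviation "p \<equiv> weyl_act C s (k - 1)"

lemma k_plus_Suc: "k + 2 = Suc (Suc k)" "k + 3 = Suc (Suc (Suc k))"
  by simp_all

lemma weyl_act_k: "weyl_act C t k x = weyl_act C t (k - 1) (srefl C (t k) x)"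
  using k_pos by (cases k) simp_all

lemma weyl_act'_before: "weyl_act C s' (k - 1) = p"
proof (rule weyl_act_cong)
  fix t
  assume "0 < t" "t \<le> k - 1"
  moreover have "t < k"
    using calculation k_pos by linarith
  ultimately show "s' t = s t"
    using letters_outside by simp
qed

lemma weyl_act_block:
  "weyl_act C s k x = p (srefl C a x)"
  "weyl_act C s (Suc k) x = p (srefl C a (srefl C b x))"
  "weyl_act C s (k + 2) x = p (srefl C a (srefl C b (srefl C a x)))"
  "weyl_act C s (k + 3) x = p (srefl C a (srefl C b (srefl C a (srefl C b x))))"
  using letters unfolding k_plus_Suc by (simp_all add: weyl_act_k)

lemma weyl_act'_block:
  "weyl_act C s' k x = p (srefl C b x)"
  "weyl_act C s' (Suc k) x = p (srefl C b (srefl C a x))"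
  "weyl_act C s' (k + 2) x = p (srefl C b (srefl C a (srefl C b x)))"
  "weyl_act C s' (k + 3) x = p (srefl C b (srefl C a (srefl C b (srefl C a x))))"
  using letters weyl_act'_before unfolding k_plus_Suc by (simp_all add: weyl_act_k)

lemma weyl_act'_outside:
  assumes "0 < u" "u < k \<or> k + 3 \<le> u"
  shows "weyl_act C s' u = weyl_act C s u"
  using assms
proof (induction u)
  case (Suc u)
  show ?case
  proof (cases "Suc u < k")
    case True
    then show ?thesis
      using letters_outside by (intro weyl_act_cong) auto
  next
    case False
    show ?thesis
    proof (cases "Suc u = k + 3")
      case True
      have "weyl_act C s' (k + 3) x = weyl_act C s (k + 3) x" for x
        unfolding weyl_act_block(4) weyl_act'_block(4)
          srefl_braid[of C a b, OF cartan_diag cartan_diag cab_cba] ..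
      then show ?thesis
        unfolding True by blast
    next
      case False
      then have "0 < u" "k + 3 \<le> u" "s' (Suc u) = s (Suc u)"
        using Suc.prems \<open>\<not> Suc u < k\<close> letters_outside by auto
      then show ?thesis
        using Suc.IH by (simp add: fun_eq_iff)
    qed
  qed
qed simp

abbreviation "wa \<equiv> fund_wt a"
abbreviation "wb \<equiv> fund_wt b"
abbreviation "ra \<equiv> simple_root C a"
abbreviation "rb \<equiv> simple_root C b"

lemma srefl_steps:
  "srefl C a wa = wa - ra"
  "srefl C a (wb - rb) = wb - rb + of_int cab * ra"
  "srefl C b (wb - rb + of_int cab * ra) = wb - 2 * rb + of_int cab * ra"
  "srefl C a (wb - 2 * rb + of_int cab * ra) = wb - 2 * rb + of_int cab * ra"
  "srefl C b wb = wb - rb"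
  "srefl C b (wa - ra) = wa - ra + of_int cba * rb"
  "srefl C a (wa - ra + of_int cba * rb) = wa - 2 * ra + of_int cba * rb"
  "srefl C b (wa - 2 * ra + of_int cba * rb) = wa - 2 * ra + of_int cba * rb"
proof -
  have ab: "cab * cba = 2" and ba: "cba * cab = 2"
    using cab_cba by (simp_all add: mult.commute)
  show "srefl C a wa = wa - ra" "srefl C b wb = wb - rb"
    by (simp_all add: srefl_fund_wt)
  show "srefl C a (wb - rb) = wb - rb + of_int cab * ra"
    "srefl C b (wb - rb + of_int cab * ra) = wb - 2 * rb + of_int cab * ra"
    "srefl C a (wb - 2 * rb + of_int cab * ra) = wb - 2 * rb + of_int cab * ra"
    using srefl_rank2_step1[of C a b] srefl_rank2_step2[of C a b] srefl_rank2_step3[of C a b]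
      cartan_diag ab by simp_all
  show "srefl C b (wa - ra) = wa - ra + of_int cba * rb"
    "srefl C a (wa - ra + of_int cba * rb) = wa - 2 * ra + of_int cba * rb"
    "srefl C b (wa - 2 * ra + of_int cba * rb) = wa - 2 * ra + of_int cba * rb"
    using srefl_rank2_step1[of C b a] srefl_rank2_step2[of C b a] srefl_rank2_step3[of C b a]
      cartan_diag ba by simp_all
qed

lemma wt_closed_forms:
  "wt_diff C s k = wa - p (wa - ra)"
  "wt_sum C s k = wa + p (wa - ra)"
  "wt_diff C s (Suc k) = wb - p (wb - rb + of_int cab * ra)"
  "wt_sum C s (Suc k) = wb + p (wb - rb + of_int cab * ra)"
  "wt_diff C s (k + 2) = wa - p (wa - 2 * ra + of_int cba * rb)"
  "wt_sum C s (k + 2) = wa + p (wa - 2 * ra + of_int cba * rb)"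
  "wt_diff C s (k + 3) = wb - p (wb - 2 * rb + of_int cab * ra)"
  "wt_sum C s (k + 3) = wb + p (wb - 2 * rb + of_int cab * ra)"
  "wt_diff C s' k = wb - p (wb - rb)"
  "wt_sum C s' k = wb + p (wb - rb)"
  "wt_diff C s' (Suc k) = wa - p (wa - ra + of_int cba * rb)"
  "wt_sum C s' (Suc k) = wa + p (wa - ra + of_int cba * rb)"
  "wt_diff C s' (k + 2) = wt_diff C s (k + 3)"
  "wt_sum C s' (k + 2) = wt_sum C s (k + 3)"
  "wt_diff C s' (k + 3) = wt_diff C s (k + 2)"
  "wt_sum C s' (k + 3) = wt_sum C s (k + 2)"
  unfolding wt_diff_def wt_sum_def weyl_act_block weyl_act'_block letters srefl_steps by simp_all

lemma wt_outside:
  "0 < u \<Longrightarrow> u < k \<or> k + 3 < u \<Longrightarrow> wt_diff C s' u = wt_diff C s u"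
  "0 < u \<Longrightarrow> u < k \<or> k + 3 < u \<Longrightarrow> wt_sum C s' u = wt_sum C s u"
  using weyl_act'_outside[of u] letters_outside[of u] by (auto simp: wt_diff_def wt_sum_def)

lemma cab_cba_scale: "of_int cab * (of_int cba * x) = 2 * (x :: 'i \<Rightarrow> int)"
proof -
  have "of_int cab * of_int cba = (2 :: 'i \<Rightarrow> int)"
    using arg_cong[OF cab_cba, of "of_int :: int \<Rightarrow> 'i \<Rightarrow> int"] by simp
  then show ?thesis
    by (simp add: mult.assoc[symmetric])
qed

lemma wt'_k_combination:
  "wt_diff C s' k = - wt_diff C s (Suc k) + (wb - p wb) + wt_diff C s (k + 3)"
  "wt_sum C s' k = - wt_sum C s (Suc k) + (wb + p wb) + wt_sum C s (k + 3)"
  unfolding wt_closed_forms weyl_act_linear by (simp_all add: algebra_simps)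

lemma wt'_Suc_k_combination:
  "wt_diff C s' (Suc k) = wt_diff C s k + of_int cba * (wb - p wb) - wt_diff C s (k + 2)
     + (wa - p wa) - of_int cba * wt_diff C s (k + 3)"
  "wt_sum C s' (Suc k) = wt_sum C s k + of_int cba * (wb + p wb) - wt_sum C s (k + 2)
     + (wa + p wa) - of_int cba * wt_sum C s (k + 3)"
  unfolding wt_closed_forms weyl_act_linear by (simp_all add: algebra_simps cab_cba_scale)

lemma form_values:
  "form wa ra = of_int (d a)" "form ra wa = of_int (d a)"
  "form wb rb = of_int (d b)" "form rb wb = of_int (d b)"
  "form wa rb = 0" "form rb wa = 0" "form wb ra = 0" "form ra wb = 0"
  "form ra ra = 2 * of_int (d a)" "form rb rb = 2 * of_int (d b)"
  "form ra rb = of_int (d a) * of_int cab" "form rb ra = of_int (d b) * of_int cba"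
  "form wb wa = form wa wb"
  "form (weyl_act C s u x) (fund_wt i) = form (fund_wt i) (weyl_act C s u x)"
  "form (weyl_act C s u x) (simple_root C i) = form (simple_root C i) (weyl_act C s u x)"
  using form_fund_wt_simple_root[OF inv cartan_diag] form_simple_roots[OF inv] cartan_diag[of a]
    cartan_diag[of b] a_neq_b form_commute[OF inv] arg_cong[OF symmetrizer_eq[of a b], of rat_of_int]
  by (simp_all add: form_commute[OF inv, of "simple_root C _" "fund_wt _"])

lemma cba_nonzero: "rat_of_int cba \<noteq> 0"
  using cba_neg by simp

lemma cab_eq: "rat_of_int cab = 2 / rat_of_int cba"
  and db_eq: "rat_of_int (d b) = rat_of_int (d a) * rat_of_int cab / rat_of_int cba"
proof -
  show "rat_of_int cab = 2 / rat_of_int cba"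
    using arg_cong[OF cab_cba, of rat_of_int] cba_nonzero by (simp add: field_simps)
  show "rat_of_int (d b) = rat_of_int (d a) * rat_of_int cab / rat_of_int cba"
    using arg_cong[OF symmetrizer_eq[of a b], of rat_of_int] cba_nonzero by (simp add: field_simps)
qed

lemmas form_eval = form_bilinear[OF inv]
  weyl_act_linear form_weyl_act[OF inv] form_values

text \<open>Unlike the row identities below, this needs the values of the form, not only bilinearity and
  Weyl invariance.\<close>
lemma exchange_k2_k3:
  "form (wt_diff C s (k + 3)) (wt_sum C s (k + 2)) = - form (wt_diff C s (k + 2)) (wt_sum C s (k + 3))"
  unfolding wt_closed_forms by (simp add: form_eval; simp add: cab_eq db_eq field_simps cba_nonzero)

subsection \<open>Comparison of \<open>\<Lambda>\<^sup>i\<^sup>'\<close> with the mutated \<open>\<Lambda>\<^sup>i\<close>\<close>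

text \<open>\<open>perm_mat\<close> permutes by the inverse, which here is \<open>tau\<close> itself.\<close>
definition tau :: "nat \<Rightarrow> nat" where
  "tau u = sigma k (sigma (k + 2) u)"

lemma tau_simps:
  "tau k = Suc k" "tau (Suc k) = k" "tau (k + 2) = k + 3" "tau (k + 3) = k + 2"
  "u \<notin> {k, Suc k, k + 2, k + 3} \<Longrightarrow> tau u = u"
  by (auto simp: tau_def sigma_def transpose_def)

lemma Lam_alpha:
  "k \<le> w \<Longrightarrow> Lam alpha w = form (wa - p wa) (wt_sum C s w)"
  "0 < w \<Longrightarrow> w < k \<Longrightarrow> Lam alpha w = - form (wt_diff C s w) (wa + p wa)"
  using Lambda_matrix_last_occurrence[OF inv, of alpha "k - 1" s a] alpha_lt alpha_last alpha_letter
  by auto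

lemma Lam_beta:
  "k \<le> w \<Longrightarrow> Lam beta w = form (wb - p wb) (wt_sum C s w)"
  "0 < w \<Longrightarrow> w < k \<Longrightarrow> Lam beta w = - form (wt_diff C s w) (wb + p wb)"
  using Lambda_matrix_last_occurrence[OF inv, of beta "k - 1" s b] beta_lt beta_last beta_letter
  by auto

lemma Lam_alpha_beta:
  "Lam alpha beta = - form (wb - p wb) (wa + p wa)"
  "Lam beta alpha = - form (wa - p wa) (wb + p wb)"
proof -
  have pa: "p wa = weyl_act C s alpha wa" and pb: "p wb = weyl_act C s beta wb"
    using alpha_lt alpha_last beta_lt beta_last by (auto intro: weyl_act_fund_wt_unchanged)
  show "Lam alpha beta = - form (wb - p wb) (wa + p wa)"
    using Lam_alpha(2)[of beta] pb beta_lt beta_letter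
    by (cases "beta = 0") (simp_all add: Lambda_matrix_def form_zero_left[OF inv] wt_diff_def)
  show "Lam beta alpha = - form (wa - p wa) (wb + p wb)"
    using Lam_beta(2)[of alpha] pa alpha_lt alpha_letter
    by (cases "alpha = 0") (simp_all add: Lambda_matrix_def form_zero_left[OF inv] wt_diff_def)
qed

lemma Lam_block_upper:
  assumes "x \<in> {k, Suc k, k + 2, k + 3}" "k + 2 \<le> w"
  shows "Lam x w = form (wt_diff C s x) (wt_sum C s w)"
proof (cases "x \<le> w")
  case True
  then show ?thesis
    using assms k_pos by (auto simp: Lambda_matrix_le)
next
  case False
  then have "x = k + 3" "w = k + 2"
    using assms by auto
  then show ?thesis
    using exchange_k2_k3 by (simp add: Lambda_matrix_gt)
qed

lemma Lam_block_lower: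
  "x \<in> {k, Suc k, k + 2, k + 3} \<Longrightarrow> 0 < w \<Longrightarrow> w < k \<Longrightarrow>
     Lam x w = - form (wt_diff C s w) (wt_sum C s x)"
  by (auto simp: Lambda_matrix_gt)

lemma wt_sum'_tau: "k + 2 \<le> v \<Longrightarrow> wt_sum C s' v = wt_sum C s (tau v)"
  using wt_closed_forms(14,16) wt_outside(2)[of v] tau_simps(3,4) tau_simps(5)[of v]
  by (cases "v = k + 2 \<or> v = k + 3") auto

lemma Lam'_block_upper:
  assumes "u \<in> {k, Suc k, k + 2, k + 3}" "k + 2 \<le> v"
  shows "Lam' u v = form (wt_diff C s' u) (wt_sum C s (tau v))"
proof (cases "u \<le> v")
  case True
  then show ?thesis
    using assms k_pos wt_sum'_tau by (auto simp: Lambda_matrix_le)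
next
  case False
  then have "u = k + 3" "v = k + 2"
    using assms by auto
  have "Lam' (k + 3) (k + 2) = - form (wt_diff C s' (k + 2)) (wt_sum C s' (k + 3))"
    by (rule Lambda_matrix_gt) simp_all
  also have "\<dots> = form (wt_diff C s (k + 2)) (wt_sum C s (k + 3))"
    unfolding wt_closed_forms(13,16) exchange_k2_k3 by simp
  also have "\<dots> = form (wt_diff C s' (k + 3)) (wt_sum C s (tau (k + 2)))"
    unfolding wt_closed_forms(15) tau_simps(3) ..
  finally show ?thesis
    using \<open>u = k + 3\<close> \<open>v = k + 2\<close> by simp
qed

lemma Lam'_block_lower:
  "u \<in> {k, Suc k, k + 2, k + 3} \<Longrightarrow> 0 < v \<Longrightarrow> v < k \<Longrightarrow>
     Lam' u v = - form (wt_diff C s v) (wt_sum C s' u)"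
  using wt_outside(1)[of v] by (auto simp: Lambda_matrix_gt)

lemma column_cases:
  assumes "v \<notin> {k, Suc k}"
  obtains "v = 0" | "0 < v" "v < k" "tau v = v" | "k + 2 \<le> v" "k + 2 \<le> tau v"
proof -
  have "v = 0 \<or> 0 < v \<and> v < k \<or> k + 2 \<le> v"
    using assms by auto
  moreover have "tau v = v" if "v < k"
    using that tau_simps(5)[of v] by auto
  moreover have "k + 2 \<le> tau v" if upper: "k + 2 \<le> v"
  proof -
    consider "v = k + 2" | "v = k + 3" | "k + 3 < v"
      using upper by (cases "v = k + 2"; cases "v = k + 3") auto
    then show ?thesis
      using tau_simps(3,4) tau_simps(5)[of v] by cases simp_all
  qed
  ultimately show ?thesis
    using that by blast
qed

lemma Lam'_row_k:
  assumes "v \<notin> {k, Suc k}"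
  shows "Lam' k v = - Lam (Suc k) (tau v) + Lam beta (tau v) + Lam (k + 3) (tau v)"
  using assms
proof (cases rule: column_cases)
  case 1
  then show ?thesis
    using tau_simps(5)[of 0] k_pos by (simp add: Lambda_matrix_def)
next
  case 2
  have "Lam' k v = - form (wt_diff C s v) (wt_sum C s' k)"
    using 2 by (simp add: Lam'_block_lower)
  also have "\<dots> = - Lam (Suc k) v + Lam beta v + Lam (k + 3) v"
    unfolding wt'_k_combination using 2 by (simp add: Lam_block_lower Lam_beta form_bilinear[OF inv])
  finally show ?thesis
    using 2 by simp
next
  case 3
  have "Lam' k v = form (wt_diff C s' k) (wt_sum C s (tau v))"
    using 3 by (simp add: Lam'_block_upper)
  also have "\<dots> = - Lam (Suc k) (tau v) + Lam beta (tau v) + Lam (k + 3) (tau v)"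
    unfolding wt'_k_combination using 3 by (simp add: Lam_block_upper Lam_beta form_bilinear[OF inv])
  finally show ?thesis .
qed

lemma Lam'_row_Suc_k:
  assumes "v \<notin> {k, Suc k}"
  shows "Lam' (Suc k) v = Lam k (tau v) + of_int cba * Lam beta (tau v) - Lam (k + 2) (tau v)
    + Lam alpha (tau v) - of_int cba * Lam (k + 3) (tau v)"
  using assms
proof (cases rule: column_cases)
  case 1
  then show ?thesis
    using tau_simps(5)[of 0] k_pos by (simp add: Lambda_matrix_def)
next
  case 2
  have "Lam' (Suc k) v = - form (wt_diff C s v) (wt_sum C s' (Suc k))"
    using 2 by (simp add: Lam'_block_lower)
  also have "\<dots> = Lam k v + of_int cba * Lam beta v - Lam (k + 2) v + Lam alpha v - of_int cba * Lam (k + 3) v"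
    unfolding wt'_Suc_k_combination using 2
    by (simp add: Lam_block_lower Lam_alpha Lam_beta form_bilinear[OF inv]; simp add: algebra_simps)
  finally show ?thesis
    using 2 by simp
next
  case 3
  have "Lam' (Suc k) v = form (wt_diff C s' (Suc k)) (wt_sum C s (tau v))"
    using 3 by (simp add: Lam'_block_upper)
  also have "\<dots> = Lam k (tau v) + of_int cba * Lam beta (tau v) - Lam (k + 2) (tau v)
    + Lam alpha (tau v) - of_int cba * Lam (k + 3) (tau v)"
    unfolding wt'_Suc_k_combination using 3
    by (simp add: Lam_block_upper Lam_alpha Lam_beta form_bilinear[OF inv])
  finally show ?thesis .
qed

lemma Lam'_rows_k2_k3:
  assumes "v \<notin> {k, Suc k}"
  shows "Lam' (k + 2) v = Lam (k + 3) (tau v) \<and> Lam' (k + 3) v = Lam (k + 2) (tau v)"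
  using assms
proof (cases rule: column_cases)
  case 1
  then show ?thesis
    using tau_simps(5)[of 0] k_pos by (simp add: Lambda_matrix_def)
next
  case 2
  have "Lam' (k + 2) v = - form (wt_diff C s v) (wt_sum C s (k + 3))"
    "Lam' (k + 3) v = - form (wt_diff C s v) (wt_sum C s (k + 2))"
    unfolding wt_closed_forms(14,16)[symmetric] using 2 by (simp_all add: Lam'_block_lower)
  then show ?thesis
    using 2 by (simp add: Lam_block_lower)
next
  case 3
  have "Lam' (k + 2) v = form (wt_diff C s (k + 3)) (wt_sum C s (tau v))"
    "Lam' (k + 3) v = form (wt_diff C s (k + 2)) (wt_sum C s (tau v))"
    unfolding wt_closed_forms(13,15)[symmetric] using 3 by (simp_all add: Lam'_block_upper)
  then show ?thesis
    using 3 by (simp add: Lam_block_upper)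
qed

lemma Lam'_outside:
  assumes "u \<notin> {k, Suc k, k + 2, k + 3}" "v \<notin> {k, Suc k, k + 2, k + 3}"
  shows "Lam' u v = Lam u v"
proof (cases "u = 0 \<or> v = 0")
  case False
  then have "u < k \<or> k + 3 < u" "v < k \<or> k + 3 < v"
    using assms by auto
  then show ?thesis
    using False wt_outside[of u] wt_outside[of v] by (simp add: Lambda_matrix_def wt_diff_def wt_sum_def)
qed (auto simp: Lambda_matrix_def)

lemma fst_seed3_rows:
  assumes "w \<notin> {k, Suc k}"
  shows "fst seed3 (Suc k) w = - Lam (Suc k) w + Lam beta w + Lam (k + 3) w"
    and "fst seed3 k w = Lam k w + of_int cba * Lam beta w - Lam (k + 2) w + Lam alpha w
      - of_int cba * Lam (k + 3) w"
    and "u \<notin> {k, Suc k} \<Longrightarrow> fst seed3 u w = Lam u w"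
  using assms alpha_lt beta_lt by (simp_all add: fst_seed3 fst_seed2 fst_seed1)

lemma Lam_lower_alpha_beta:
  "k \<le> x \<Longrightarrow> Lam x alpha = - form (wa - p wa) (wt_sum C s x)"
  "k \<le> x \<Longrightarrow> Lam x beta = - form (wb - p wb) (wt_sum C s x)"
proof -
  have "Lam x y = - Lam y x" for y
    using skew_matrix_Lambda_matrix[OF inv] unfolding skew_matrix_def by blast
  then show "k \<le> x \<Longrightarrow> Lam x alpha = - form (wa - p wa) (wt_sum C s x)"
    "k \<le> x \<Longrightarrow> Lam x beta = - form (wb - p wb) (wt_sum C s x)"
    using Lam_alpha(1)[of x] Lam_beta(1)[of x] by (metis neg_equal_iff_equal)+
qed

lemma seed3_diag: "fst seed3 x x = 0"
  using skew_matrix_seed3 unfolding skew_matrix_def by (metis neg_equal_zero)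

text \<open>Both sides are expanded into values of the form on the rank-2 weights, which agree because
  \<open>c\<^sub>a\<^sub>b c\<^sub>b\<^sub>a = 2\<close> and \<open>d\<^sub>a c\<^sub>a\<^sub>b = d\<^sub>b c\<^sub>b\<^sub>a\<close>.\<close>
lemma Lam'_corner: "Lam' k (Suc k) = fst seed3 (Suc k) k"
proof -
  have "fst seed3 (Suc k) k =
      - (- (- Lam (Suc k) k - of_int cba * Lam (Suc k) beta + Lam (Suc k) (k + 2))
         + (- Lam beta k - of_int cba * Lam beta beta + Lam beta (k + 2))
         + (- Lam (k + 3) k - of_int cba * Lam (k + 3) beta + Lam (k + 3) (k + 2)))
      + (- Lam (Suc k) alpha + Lam beta alpha + Lam (k + 3) alpha)
      - of_int cba * (- Lam (Suc k) (k + 3) + Lam beta (k + 3) + Lam (k + 3) (k + 3))"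
    using alpha_lt beta_lt by (simp add: fst_seed3 fst_seed2 fst_seed1)
  also have "\<dots> =
      - (- (form (wt_diff C s k) (wt_sum C s (Suc k)) + of_int cba * form (wb - p wb) (wt_sum C s (Suc k))
            + form (wt_diff C s (Suc k)) (wt_sum C s (k + 2)))
         + (- form (wb - p wb) (wt_sum C s k) + form (wb - p wb) (wt_sum C s (k + 2)))
         + (form (wt_diff C s k) (wt_sum C s (k + 3)) + of_int cba * form (wb - p wb) (wt_sum C s (k + 3))
            - form (wt_diff C s (k + 2)) (wt_sum C s (k + 3))))
      + (form (wa - p wa) (wt_sum C s (Suc k)) - form (wa - p wa) (wb + p wb)
         - form (wa - p wa) (wt_sum C s (k + 3)))
      - of_int cba * (- form (wt_diff C s (Suc k)) (wt_sum C s (k + 3))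
         + form (wb - p wb) (wt_sum C s (k + 3)))"
    using k_pos Lambda_matrix_diag[OF inv]
    by (simp del: add_2_eq_Suc' add: Lambda_matrix_gt Lam_block_upper Lam_beta Lam_lower_alpha_beta
        Lam_alpha_beta)
  also have "\<dots> = form (wt_diff C s' k) (wt_sum C s' (Suc k))"
    unfolding wt_closed_forms
    by (simp add: form_eval; simp add: cab_eq db_eq field_simps cba_nonzero less_imp_neq[OF cba_neg])
  also have "\<dots> = Lam' k (Suc k)"
    using k_pos by (simp add: Lambda_matrix_le)
  finally show ?thesis ..
qed

lemma Lam'_eq_seed3: "Lam' u v = fst seed3 (tau u) (tau v)"
proof -
  have block: "Lam' x y = fst seed3 (tau x) (tau y)"
    if x: "x \<in> {k, Suc k, k + 2, k + 3}" and y: "y \<notin> {k, Suc k}" for x y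
  proof -
    have ty: "tau y \<notin> {k, Suc k}"
      using y tau_simps by (cases "y = k + 2 \<or> y = k + 3") auto
    from x consider "x = k" | "x = Suc k" | "x = k + 2" | "x = k + 3"
      by blast
    then show ?thesis
    proof cases
      case 1
      show ?thesis
        unfolding 1 Lam'_row_k[OF y] tau_simps(1) fst_seed3_rows(1)[OF ty] ..
    next
      case 2
      show ?thesis
        unfolding 2 Lam'_row_Suc_k[OF y] tau_simps(2) fst_seed3_rows(2)[OF ty] ..
    next
      case 3
      have "fst seed3 (k + 3) (tau y) = Lam (k + 3) (tau y)"
        using fst_seed3_rows(3)[OF ty] by simp
      then show ?thesis
        unfolding 3 tau_simps(3) using Lam'_rows_k2_k3[OF y] by simp
    next
      case 4
      have "fst seed3 (k + 2) (tau y) = Lam (k + 2) (tau y)"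
        using fst_seed3_rows(3)[OF ty] by simp
      then show ?thesis
        unfolding 4 tau_simps(4) using Lam'_rows_k2_k3[OF y] by simp
    qed
  qed
  have skew: "Lam' x y = - Lam' y x" "fst seed3 (tau x) (tau y) = - fst seed3 (tau y) (tau x)" for x y
    using skew_matrix_Lambda_matrix[OF inv] skew_matrix_seed3 unfolding skew_matrix_def by blast+
  consider "u \<in> {k, Suc k, k + 2, k + 3}" "v \<notin> {k, Suc k}"
    | "v \<in> {k, Suc k, k + 2, k + 3}" "u \<notin> {k, Suc k}"
    | "u = v"
    | "u = k" "v = Suc k"
    | "u = Suc k" "v = k"
    | "u \<notin> {k, Suc k, k + 2, k + 3}" "v \<notin> {k, Suc k, k + 2, k + 3}"
    by blast
  then show ?thesis
  proof cases
    case 1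
    then show ?thesis by (rule block)
  next
    case 2
    then show ?thesis
      using block[of v u] skew[of u v] by simp
  next
    case 3
    then show ?thesis
      by (simp add: Lambda_matrix_diag[OF inv] seed3_diag)
  next
    case 4
    then show ?thesis
      using Lam'_corner tau_simps by simp
  next
    case 5
    then show ?thesis
      using Lam'_corner tau_simps skew[of "Suc k" k] by simp
  next
    case 6
    then show ?thesis
      using Lam'_outside[OF 6] fst_seed3_rows(3)[of v u] tau_simps(5)[of u] tau_simps(5)[of v] by simp
  qed
qed

end

theorem lemma3p5:
  fixes C :: "'i::finite \<Rightarrow> 'i \<Rightarrow> int" and d :: "'i \<Rightarrow> int"
    and form :: "('i \<Rightarrow> int) \<Rightarrow> ('i \<Rightarrow> int) \<Rightarrow> rat"
    and s s' :: "nat \<Rightarrow> 'i" and k :: nat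
  assumes "cartan_of_simple_lie_algebra C"
    and "is_min_symmetrizer C d"
    and "invariant_form C d form"
    and "in_I_infty s" and "in_I_infty s'"
    and "1 \<le> k"
    and "four_move C k s s'"
  shows "Lambda_matrix C form s' =
         fst ((perm_pair (sigma (k+2)) \<circ> perm_pair (sigma k) \<circ> mutate k \<circ> mutate (k+1) \<circ> mutate k)
                (Lambda_matrix C form s, exch_matrix C s))"
proof -
  interpret four_move_setting C d form s s' k
    using assms(1-4,6,7) by unfold_locales
  have "fst ((perm_pair (sigma (k+2)) \<circ> perm_pair (sigma k) \<circ> mutate k \<circ> mutate (k+1) \<circ> mutate k)
      (Lam, exch_matrix C s)) u v = fst seed3 (tau u) (tau v)" for u v
    by (simp add: seed1_def seed2_def seed3_def tau_def perm_pair_def perm_mat_def sigma_def)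
  then show ?thesis
    by (simp add: fun_eq_iff Lam'_eq_seed3)
qed

end
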